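(* The class $\mathbb{ML}^{\Box\Diamond}$, regarded as a class of algebras $(L;\wedge,\vee,\neg,\Box,\Diamond)$, is an equational class (a variety). Concretely, such an algebra belongs to $\mathbb{ML}^{\Box\Diamond}$ if and only if it satisfies the lattice identities, the identities $x\wedge\neg x\preccurlyeq y$, $y\preccurlyeq\neg(x\wedge\neg x)$, $x\wedge\neg(x\wedge y)\preccurlyeq\neg y$, $x\vee\neg\Box x\approx 1$, $\Box 1\approx 1$, $\Box(x\vee\neg y)\wedge y\approx\Box x\wedge y$, and the identities $\neg x\vee\Diamond x\approx 1$, $\Diamond x\preccurlyeq\Diamond(x\vee y)$, $\Diamond\Box x\preccurlyeq x$, where $1$ abbreviates $\neg(x\wedge\neg x)$ and $s\preccurlyeq t$ abbreviates $s\wedge t\approx s$.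
   Context: A meet-complemented lattice is a lattice $(L,\le)$ (not necessarily distributive) such that for every $a\in L$ the element $\neg a=\max\{b\in L: a\wedge b\le c\ \text{for all } c\in L\}$ exists; such a lattice is bounded, with bottom $0$ and top $1$. For $a\in L$, $\Box a=\max\{b\in L: a\vee\neg b=1\}$ and $\Diamond a=\min\{b\in L: \neg a\vee b=1\}$, when these exist. $\mathbb{ML}^{\Box\Diamond}$ is the class of meet-complemented lattices in which both $\Box a$ and $\Diamond a$ exist for every $a$, considered as algebras with operations $\wedge,\vee,\neg,\Box,\Diamond$. *)

theory Defs
  imports Main
begin

definition lattice_ops :: "('a \<Rightarrow> 'a \<Rightarrow> 'a) \<Rightarrow> ('a \<Rightarrow> 'a \<Rightarrow> 'a) \<Rightarrow> bool" where
  "lattice_ops m j \<longleftrightarrow>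
     (\<forall>x y. m x y = m y x) \<and> (\<forall>x y. j x y = j y x) \<and>
     (\<forall>x y z. m (m x y) z = m x (m y z)) \<and> (\<forall>x y z. j (j x y) z = j x (j y z)) \<and>
     (\<forall>x. m x x = x) \<and> (\<forall>x. j x x = x) \<and>
     (\<forall>x y. m x (j x y) = x) \<and> (\<forall>x y. j x (m x y) = x)"

definition mle :: "('a \<Rightarrow> 'a \<Rightarrow> 'a) \<Rightarrow> 'a \<Rightarrow> 'a \<Rightarrow> bool" where
  "mle m a b \<longleftrightarrow> m a b = a"

definition is_greatest_in :: "('a \<Rightarrow> 'a \<Rightarrow> 'a) \<Rightarrow> ('a \<Rightarrow> bool) \<Rightarrow> 'a \<Rightarrow> bool" where
  "is_greatest_in m P x \<longleftrightarrow> P x \<and> (\<forall>y. P y \<longrightarrow> mle m y x)"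

definition is_least_in :: "('a \<Rightarrow> 'a \<Rightarrow> 'a) \<Rightarrow> ('a \<Rightarrow> bool) \<Rightarrow> 'a \<Rightarrow> bool" where
  "is_least_in m P x \<longleftrightarrow> P x \<and> (\<forall>y. P y \<longrightarrow> mle m x y)"

text \<open>Membership in the class ML^{box dia}: (L, meet, join) is a lattice, neg a is the
  meet-complement, and box / dia are the operations defined from it (1 = top).\<close>
definition in_MLbd ::
  "('a \<Rightarrow> 'a \<Rightarrow> 'a) \<Rightarrow> ('a \<Rightarrow> 'a \<Rightarrow> 'a) \<Rightarrow> ('a \<Rightarrow> 'a) \<Rightarrow> ('a \<Rightarrow> 'a) \<Rightarrow> ('a \<Rightarrow> 'a) \<Rightarrow> bool" where
  "in_MLbd m j n b d \<longleftrightarrow>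
     lattice_ops m j \<and>
     (\<forall>a. is_greatest_in m (\<lambda>c. \<forall>e. mle m (m a c) e) (n a)) \<and>
     (\<exists>t. (\<forall>x. mle m x t) \<and>
          (\<forall>a. is_greatest_in m (\<lambda>c. j a (n c) = t) (b a)) \<and>
          (\<forall>a. is_least_in m (\<lambda>c. j (n a) c = t) (d a)))"

end

theory Submission
  imports Defs
begin

text \<open>Each of the defining extremal properties splits into an identity saying that the element
  is a candidate and an identity forcing every other candidate below (or above) it.
  For \<open>\<not>\<close> the latter is \<open>x \<and> \<not>(x \<and> y) \<le> \<not>y\<close>: if \<open>y \<and> c\<close> is the bottom then
  \<open>\<not>(c \<and> y) = 1\<close>, so \<open>c \<le> \<not>y\<close>. For \<open>\<box>\<close> it is \<open>\<box>(x \<or> \<not>y) \<and> y = \<box>x \<and> y\<close> together with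
  \<open>\<box>1 = 1\<close>: if \<open>a \<or> \<not>c = 1\<close> then \<open>c = \<box>1 \<and> c = \<box>a \<and> c\<close>. For \<open>\<diamond>\<close>, minimality follows from
  \<open>a \<or> \<not>c = 1 \<Longrightarrow> a \<le> \<box>c\<close>, monotonicity of \<open>\<diamond>\<close> and \<open>\<diamond>\<box>c \<le> c\<close>. Conversely all identities are
  routine consequences of the extremal properties, using that \<open>\<not>\<close> is antitone and \<open>\<box>\<close> monotone.\<close>

locale lattice_alg =
  fixes m j :: "'a \<Rightarrow> 'a \<Rightarrow> 'a"
  assumes lattice_ops: "lattice_ops m j"
begin

lemma meet_comm: "m x y = m y x"
  and join_comm: "j x y = j y x"
  and meet_assoc: "m (m x y) z = m x (m y z)"
  and join_assoc: "j (j x y) z = j x (j y z)"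
  and meet_idem: "m x x = x"
  and join_idem: "j x x = x"
  and meet_absorb: "m x (j x y) = x"
  and join_absorb: "j x (m x y) = x"
  using lattice_ops unfolding lattice_ops_def by blast+

lemma mle_iff_join: "mle m x y \<longleftrightarrow> j x y = y"
  unfolding mle_def by (metis meet_comm join_comm meet_absorb join_absorb)

lemma mle_refl: "mle m x x"
  by (simp add: mle_def meet_idem)

lemma mle_antisym: "mle m x y \<Longrightarrow> mle m y x \<Longrightarrow> x = y"
  unfolding mle_def by (metis meet_comm)

lemma mle_trans: "mle m x y \<Longrightarrow> mle m y z \<Longrightarrow> mle m x z"
  unfolding mle_def by (metis meet_assoc)

lemma mle_meet1: "mle m (m x y) x"
  unfolding mle_def by (metis meet_comm meet_assoc meet_idem)

lemma mle_meet2: "mle m (m x y) y"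
  unfolding mle_def by (metis meet_assoc meet_idem)

lemma mle_meetI: "mle m z x \<Longrightarrow> mle m z y \<Longrightarrow> mle m z (m x y)"
  unfolding mle_def by (metis meet_assoc)

lemma mle_join1: "mle m x (j x y)"
  unfolding mle_iff_join by (metis join_assoc join_idem)

lemma mle_join2: "mle m y (j x y)"
  unfolding mle_iff_join by (metis join_assoc join_idem join_comm)

lemma mle_joinI: "mle m x z \<Longrightarrow> mle m y z \<Longrightarrow> mle m (j x y) z"
  unfolding mle_iff_join by (metis join_assoc)

lemma join_mono: "mle m x x' \<Longrightarrow> mle m y y' \<Longrightarrow> mle m (j x y) (j x' y')"
  by (meson mle_join1 mle_join2 mle_joinI mle_trans)

lemma meet_mono: "mle m x x' \<Longrightarrow> mle m y y' \<Longrightarrow> mle m (m x y) (m x' y')"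
  by (meson mle_meet1 mle_meet2 mle_meetI mle_trans)

end

locale ml_box_dia = lattice_alg +
  fixes n b d :: "'a \<Rightarrow> 'a" and t :: 'a
  assumes mle_top: "mle m x t"
    and neg_greatest: "is_greatest_in m (\<lambda>c. \<forall>e. mle m (m a c) e) (n a)"
    and box_greatest: "is_greatest_in m (\<lambda>c. j a (n c) = t) (b a)"
    and dia_least: "is_least_in m (\<lambda>c. j (n a) c = t) (d a)"
begin

lemma meet_neg_le: "mle m (m a (n a)) e"
  using neg_greatest unfolding is_greatest_in_def by blast

lemma mle_negI: "(\<And>e. mle m (m a c) e) \<Longrightarrow> mle m c (n a)"
  using neg_greatest unfolding is_greatest_in_def by blast

lemma join_neg_box: "j a (n (b a)) = t"
  using box_greatest unfolding is_greatest_in_def by blast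

lemma mle_boxI: "j a (n c) = t \<Longrightarrow> mle m c (b a)"
  using box_greatest unfolding is_greatest_in_def by blast

lemma join_neg_dia: "j (n a) (d a) = t"
  using dia_least unfolding is_least_in_def by blast

lemma dia_mleI: "j (n a) c = t \<Longrightarrow> mle m (d a) c"
  using dia_least unfolding is_least_in_def by blast

lemma top_unique: "mle m t z \<Longrightarrow> z = t"
  using mle_antisym mle_top by blast

lemma neg_bot_eq_top: "n (m x (n x)) = t"
  by (meson mle_antisym mle_top mle_negI meet_neg_le mle_meet1 mle_trans)

lemma neg_antitone: "mle m c c' \<Longrightarrow> mle m (n c') (n c)"
  by (meson meet_mono mle_refl mle_negI meet_neg_le mle_trans)

lemma box_mono: "mle m x y \<Longrightarrow> mle m (b x) (b y)"
  by (metis join_mono mle_refl mle_boxI join_neg_box top_unique)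

lemma meet_neg_meet_le_neg: "mle m (m x (n (m x y))) (n y)"
proof (rule mle_negI)
  fix e
  have "m y (m x (n (m x y))) = m (m x y) (n (m x y))"
    by (metis meet_assoc meet_comm)
  then show "mle m (m y (m x (n (m x y)))) e"
    by (simp add: meet_neg_le)
qed

lemma box_top: "b t = t"
  by (metis mle_boxI top_unique mle_join1 mle_top)

lemma box_join_neg_meet: "m (b (j x (n y))) y = m (b x) y"
proof (rule mle_antisym)
  let ?c = "m (b (j x (n y))) y"
  have "mle m (j (j x (n y)) (n (b (j x (n y))))) (j x (n ?c))"
    by (metis join_assoc join_mono mle_refl mle_joinI neg_antitone mle_meet1 mle_meet2)
  then have "mle m ?c (b x)"
    by (metis mle_boxI join_neg_box top_unique)
  then show "mle m ?c (m (b x) y)"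
    using mle_meetI mle_meet2 by blast
  show "mle m (m (b x) y) ?c"
    using meet_mono box_mono mle_join1 mle_refl by blast
qed

lemma dia_mono_join: "mle m (d x) (d (j x y))"
proof -
  have "mle m (j (n (j x y)) (d (j x y))) (j (n x) (d (j x y)))"
    by (simp add: join_mono mle_refl neg_antitone mle_join1)
  then show ?thesis
    by (metis dia_mleI join_neg_dia top_unique)
qed

lemma dia_box_le: "mle m (d (b x)) x"
  by (metis dia_mleI join_comm join_neg_box)

end

locale ml_box_dia_identities = lattice_alg +
  fixes n b d :: "'a \<Rightarrow> 'a"
  assumes meet_neg_le: "mle m (m x (n x)) y"
    and mle_neg_bot: "mle m y (n (m x (n x)))"
    and meet_neg_meet_le_neg: "mle m (m x (n (m x y))) (n y)"
    and join_neg_box: "j x (n (b x)) = n (m x (n x))"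
    and box_top: "b (n (m x (n x))) = n (m x (n x))"
    and box_join_neg_meet: "m (b (j x (n y))) y = m (b x) y"
    and join_neg_dia: "j (n x) (d x) = n (m x (n x))"
    and dia_mono_join: "mle m (d x) (d (j x y))"
    and dia_box_le: "mle m (d (b x)) x"
begin

lemma neg_bot_eq: "n (m y (n y)) = n (m x (n x))"
  using mle_neg_bot mle_antisym by blast

lemma neg_greatest: "is_greatest_in m (\<lambda>c. \<forall>e. mle m (m a c) e) (n a)"
  unfolding is_greatest_in_def
proof (intro allI conjI impI)
  fix e show "mle m (m a (n a)) e" by (rule meet_neg_le)
next
  fix c assume "\<forall>e. mle m (m a c) e"
  then have "m c a = m c (n c)"
    using meet_neg_le mle_antisym meet_comm by metis
  then have "m c (n (m c a)) = c"
    using mle_neg_bot meet_comm mle_def by metis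
  then show "mle m c (n a)"
    using meet_neg_meet_le_neg[of c a] by simp
qed

lemma box_greatest: "is_greatest_in m (\<lambda>c. j a (n c) = n (m x (n x))) (b a)"
  unfolding is_greatest_in_def
proof (intro allI conjI impI)
  show "j a (n (b a)) = n (m x (n x))"
    using join_neg_box neg_bot_eq by simp
next
  fix c assume "j a (n c) = n (m x (n x))"
  then have "m (n (m x (n x))) c = m (b a) c"
    using box_join_neg_meet[of a c] box_top by metis
  then show "mle m c (b a)"
    using mle_neg_bot meet_comm mle_def by metis
qed

lemma dia_least: "is_least_in m (\<lambda>c. j (n a) c = n (m x (n x))) (d a)"
  unfolding is_least_in_def
proof (intro allI conjI impI)
  show "j (n a) (d a) = n (m x (n x))"
    using join_neg_dia neg_bot_eq by simp
next
  fix c assume "j (n a) c = n (m x (n x))"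
  then have "mle m a (b c)"
    using box_greatest join_comm unfolding is_greatest_in_def by metis
  then have "j a (b c) = b c"
    using mle_iff_join by blast
  then show "mle m (d a) c"
    using dia_mono_join[of a "b c"] dia_box_le[of c] mle_trans by metis
qed

lemma ml_box_dia: "ml_box_dia m j n b d (n (m x (n x)))"
  by (unfold_locales) (use mle_neg_bot neg_greatest box_greatest dia_least in blast)+

end

lemma (in ml_box_dia) ml_box_dia_identities: "ml_box_dia_identities m j n b d"
  by unfold_locales
    (simp_all add: neg_bot_eq_top meet_neg_le mle_top meet_neg_meet_le_neg join_neg_box box_top
      box_join_neg_meet join_neg_dia dia_mono_join dia_box_le)

lemma in_MLbd_iff_ml_box_dia: "in_MLbd m j n b d \<longleftrightarrow> (\<exists>t. ml_box_dia m j n b d t)"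
  unfolding in_MLbd_def ml_box_dia_def ml_box_dia_axioms_def lattice_alg_def by blast

theorem mainTheorem2:
  fixes m j :: "'a \<Rightarrow> 'a \<Rightarrow> 'a" and n b d :: "'a \<Rightarrow> 'a"
  shows "in_MLbd m j n b d \<longleftrightarrow>
    (lattice_ops m j \<and>
     (\<forall>x y. mle m (m x (n x)) y) \<and>
     (\<forall>x y. mle m y (n (m x (n x)))) \<and>
     (\<forall>x y. mle m (m x (n (m x y))) (n y)) \<and>
     (\<forall>x. j x (n (b x)) = n (m x (n x))) \<and>
     (\<forall>x. b (n (m x (n x))) = n (m x (n x))) \<and>
     (\<forall>x y. m (b (j x (n y))) y = m (b x) y) \<and>
     (\<forall>x. j (n x) (d x) = n (m x (n x))) \<and>
     (\<forall>x y. mle m (d x) (d (j x y))) \<and>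
     (\<forall>x. mle m (d (b x)) x))"
proof -
  have "in_MLbd m j n b d \<longleftrightarrow> ml_box_dia_identities m j n b d"
    using ml_box_dia_identities.ml_box_dia ml_box_dia.ml_box_dia_identities
    unfolding in_MLbd_iff_ml_box_dia by metis
  then show ?thesis
    unfolding ml_box_dia_identities_def ml_box_dia_identities_axioms_def lattice_alg_def
    by blast
qed

end
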